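(* Let $a_c\in(\pi,\frac32\pi)$ be the smallest strictly positive solution of $\tan(x)=\tanh(x)$. For $a>0$ the inequality $$\cosh(a)\sin(a)\sinh(x)\cos(x)-\sinh(a)\cos(a)\cosh(x)\sin(x)>0$$ holds for all $x\in(0,a)$ if and only if $a\in(0,a_c]$. *)

theory Defs
  imports "HOL-Analysis.Analysis"
begin

definition a_c :: real where
  "a_c = Inf {x::real. x > 0 \<and> tan x = tanh x}"

end

theory Submission
  imports Defs
begin

text \<open>Let \<open>h t = cosh t sin t - sinh t cos t\<close>. Since \<open>h' t = 2 sinh t sin t\<close>, \<open>h\<close> is positive
  on \<open>(0, pi]\<close> and strictly decreasing on \<open>[pi, 2 pi]\<close>, so it has exactly one zero there,
  which lies in \<open>(pi, 3/2 pi)\<close>; for \<open>t > 0\<close> the zeros of \<open>h\<close> are the solutions of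
  \<open>tan t = tanh t\<close>, so this zero is \<open>a_c\<close>.
  The form \<open>F a x\<close> of the theorem equals \<open>(sinh (a+x) sin (a-x) - sinh (a-x) sin (a+x)) / 2\<close>,
  so for \<open>0 < x < a\<close> it is positive iff \<open>q (a+x) < q (a-x)\<close> with \<open>q = sin / sinh\<close>, and
  \<open>q' = - h / sinh\<^sup>2\<close>. Hence \<open>q\<close> decreases on \<open>(0, a_c]\<close> and increases on \<open>[a_c, 2 pi]\<close>.
  For \<open>a = a_c\<close> one has \<open>F a_c x = - cosh a_c sin a_c h x > 0\<close>, and for \<open>a < a_c\<close> the part
  of \<open>[a-x, a+x]\<close> beyond \<open>a_c\<close> is mirrored by this case. For \<open>a_c < a < 2 pi\<close>, \<open>q\<close> increases
  near \<open>a\<close>, so \<open>F a x < 0\<close> for small \<open>x\<close>; for \<open>a \<ge> 2 pi\<close>, \<open>F a pi\<close> and \<open>F a (2 pi)\<close>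
  have opposite signs.\<close>

definition tan_tanh_gap :: "real \<Rightarrow> real" where
  "tan_tanh_gap t = cosh t * sin t - sinh t * cos t"

definition sin_sinh_ratio :: "real \<Rightarrow> real" where
  "sin_sinh_ratio t = sin t / sinh t"

definition tan_tanh_cross :: "real \<Rightarrow> real \<Rightarrow> real" where
  "tan_tanh_cross a x = cosh a * sin a * sinh x * cos x - sinh a * cos a * cosh x * sin x"

lemma tan_eq_tanh_iff_gap_zero:
  assumes "x > 0"
  shows "tan x = tanh x \<longleftrightarrow> tan_tanh_gap x = 0"
proof (cases "cos x = 0")
  case True
  then have "sin x \<noteq> 0" using sin_cos_squared_add[of x] by auto
  moreover have "tanh x \<noteq> 0" using assms by (simp add: tanh_def)
  ultimately show ?thesis using True by (simp add: tan_def tan_tanh_gap_def)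
next
  case False
  then show ?thesis using cosh_real_pos[of x]
    by (simp add: tan_def tanh_def tan_tanh_gap_def divide_simps algebra_simps)
qed

lemma DERIV_tan_tanh_gap: "(tan_tanh_gap has_real_derivative 2 * sinh t * sin t) (at t)"
  unfolding tan_tanh_gap_def[abs_def] by (auto intro!: derivative_eq_intros simp: algebra_simps)

lemma continuous_on_tan_tanh_gap: "continuous_on S tan_tanh_gap"
  unfolding tan_tanh_gap_def[abs_def] by (intro continuous_intros)

lemma tan_tanh_gap_pos:
  assumes "0 < t" "t \<le> pi"
  shows "tan_tanh_gap t > 0"
proof -
  have "tan_tanh_gap 0 < tan_tanh_gap t"
  proof (rule DERIV_pos_imp_increasing_open[OF assms(1) _ continuous_on_tan_tanh_gap])
    fix x assume "0 < x" "x < t"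
    then have "2 * sinh x * sin x > 0" using assms sin_gt_zero[of x] by simp
    then show "\<exists>y. (tan_tanh_gap has_real_derivative y) (at x) \<and> 0 < y"
      using DERIV_tan_tanh_gap by blast
  qed
  then show ?thesis by (simp add: tan_tanh_gap_def)
qed

lemma tan_tanh_gap_strict_antimono:
  assumes "pi \<le> s" "s < t" "t \<le> 2 * pi"
  shows "tan_tanh_gap t < tan_tanh_gap s"
proof (rule DERIV_neg_imp_decreasing_open[OF assms(2) _ continuous_on_tan_tanh_gap])
  fix x assume "s < x" "x < t"
  then have "sinh x > 0" "sin x < 0" using assms pi_gt_zero sin_lt_zero[of x] by auto
  then have "2 * sinh x * sin x < 0" by (simp add: mult_pos_neg)
  then show "\<exists>y. (tan_tanh_gap has_real_derivative y) (at x) \<and> y < 0"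
    using DERIV_tan_tanh_gap by blast
qed

lemma tan_tanh_gap_3_2_pi: "tan_tanh_gap (3/2 * pi) < 0"
proof -
  have "sin (3/2 * pi) = -1" "cos (3/2 * pi) = 0"
    using sin_periodic_pi[of "pi/2"] cos_periodic_pi[of "pi/2"] by (simp_all add: algebra_simps)
  then show ?thesis using cosh_real_pos[of "3/2 * pi"] by (simp add: tan_tanh_gap_def)
qed

lemma tan_tanh_gap_root_exists: "\<exists>c. pi < c \<and> c < 3/2 * pi \<and> tan_tanh_gap c = 0"
proof -
  have pos: "tan_tanh_gap pi > 0" using tan_tanh_gap_pos by simp
  obtain c where "pi \<le> c" "c \<le> 3/2 * pi" "tan_tanh_gap c = 0"
    using IVT2'[of tan_tanh_gap "3/2 * pi" 0 pi] pos tan_tanh_gap_3_2_pi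
      continuous_on_tan_tanh_gap by force
  moreover have "c \<noteq> pi" "c \<noteq> 3/2 * pi"
    using \<open>tan_tanh_gap c = 0\<close> pos tan_tanh_gap_3_2_pi by (metis less_irrefl)+
  ultimately show ?thesis by (intro exI[of _ c]) auto
qed

lemma tan_tanh_gap_pos_below_root:
  assumes "tan_tanh_gap c = 0" "c \<le> 2 * pi" "0 < t" "t < c"
  shows "tan_tanh_gap t > 0"
proof (cases "t \<le> pi")
  case False
  then show ?thesis using tan_tanh_gap_strict_antimono[of t c] assms by auto
qed (use assms tan_tanh_gap_pos in auto)

lemma tan_tanh_gap_neg_above_root:
  assumes "tan_tanh_gap c = 0" "pi \<le> c" "c < t" "t \<le> 2 * pi"
  shows "tan_tanh_gap t < 0"
  using tan_tanh_gap_strict_antimono[of c t] assms by auto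

lemma a_c_is_gap_root:
  assumes "pi < c" "c < 3/2 * pi" "tan_tanh_gap c = 0"
  shows "a_c = c"
  unfolding a_c_def
proof (rule cInf_eq_minimum)
  show "c \<in> {x. 0 < x \<and> tan x = tanh x}"
    using assms pi_gt_zero tan_eq_tanh_iff_gap_zero[of c] by auto
  fix x :: real assume "x \<in> {x. 0 < x \<and> tan x = tanh x}"
  then show "c \<le> x"
    using tan_eq_tanh_iff_gap_zero[of x] tan_tanh_gap_pos_below_root[OF assms(3), of x] assms
    by force
qed

lemma a_c_bounds: "pi < a_c" "a_c < 3/2 * pi"
  and tan_tanh_gap_a_c: "tan_tanh_gap a_c = 0"
  using tan_tanh_gap_root_exists a_c_is_gap_root by auto

lemma DERIV_sin_sinh_ratio:
  assumes "t \<noteq> 0"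
  shows "(sin_sinh_ratio has_real_derivative - tan_tanh_gap t / (sinh t)\<^sup>2) (at t)"
proof -
  have "sinh t \<noteq> 0" using assms by simp
  then show ?thesis
    unfolding sin_sinh_ratio_def[abs_def] tan_tanh_gap_def
    by (auto intro!: derivative_eq_intros simp: field_simps power2_eq_square)
qed

lemma continuous_on_sin_sinh_ratio: "0 \<notin> S \<Longrightarrow> continuous_on S sin_sinh_ratio"
  unfolding sin_sinh_ratio_def[abs_def] by (intro continuous_intros) auto

lemma sin_sinh_ratio_strict_antimono:
  assumes "0 < s" "s < t" "\<And>x. s < x \<Longrightarrow> x < t \<Longrightarrow> tan_tanh_gap x > 0"
  shows "sin_sinh_ratio t < sin_sinh_ratio s"
proof (rule DERIV_neg_imp_decreasing_open[OF assms(2)])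
  fix x assume "s < x" "x < t"
  then have "- tan_tanh_gap x / (sinh x)\<^sup>2 < 0" using assms by simp
  then show "\<exists>y. (sin_sinh_ratio has_real_derivative y) (at x) \<and> y < 0"
    using DERIV_sin_sinh_ratio[of x] \<open>s < x\<close> assms(1) by auto
qed (use assms(1) continuous_on_sin_sinh_ratio in auto)

lemma sin_sinh_ratio_strict_mono:
  assumes "0 < s" "s < t" "\<And>x. s < x \<Longrightarrow> x < t \<Longrightarrow> tan_tanh_gap x < 0"
  shows "sin_sinh_ratio s < sin_sinh_ratio t"
proof (rule DERIV_pos_imp_increasing_open[OF assms(2)])
  fix x assume "s < x" "x < t"
  then have "0 < - tan_tanh_gap x / (sinh x)\<^sup>2" using assms by (simp add: divide_neg_pos)
  then show "\<exists>y. (sin_sinh_ratio has_real_derivative y) (at x) \<and> 0 < y"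
    using DERIV_sin_sinh_ratio[of x] \<open>s < x\<close> assms(1) by auto
qed (use assms(1) continuous_on_sin_sinh_ratio in auto)

lemma tan_tanh_cross_eq:
  "tan_tanh_cross a x = (sinh (a + x) * sin (a - x) - sinh (a - x) * sin (a + x)) / 2"
  unfolding tan_tanh_cross_def by (simp add: sinh_add sinh_diff sin_add sin_diff algebra_simps)

lemma tan_tanh_cross_eq_ratio_diff:
  assumes "0 < x" "x < a"
  shows "tan_tanh_cross a x
    = sinh (a + x) * sinh (a - x) / 2 * (sin_sinh_ratio (a - x) - sin_sinh_ratio (a + x))"
proof -
  have "sinh (a + x) \<noteq> 0" "sinh (a - x) \<noteq> 0" using assms by auto
  then show ?thesis unfolding tan_tanh_cross_eq sin_sinh_ratio_def by (simp add: field_simps)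
qed

lemma tan_tanh_cross_pos_iff:
  assumes "0 < x" "x < a"
  shows "tan_tanh_cross a x > 0 \<longleftrightarrow> sin_sinh_ratio (a + x) < sin_sinh_ratio (a - x)"
proof -
  have pos: "sinh (a + x) * sinh (a - x) / 2 > 0" using assms by simp
  show ?thesis unfolding tan_tanh_cross_eq_ratio_diff[OF assms]
    by (metis pos zero_less_mult_pos diff_gt_0_iff_gt mult_pos_pos)
qed

lemma tan_tanh_cross_at_gap_root:
  assumes "tan_tanh_gap a = 0"
  shows "tan_tanh_cross a x = - (cosh a * sin a) * tan_tanh_gap x"
proof -
  have "cosh a * sin a = sinh a * cos a" using assms by (simp add: tan_tanh_gap_def)
  then show ?thesis by (simp add: tan_tanh_cross_def tan_tanh_gap_def algebra_simps)
qed

lemma tan_tanh_cross_a_c_pos: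
  assumes "0 < x" "x < a_c"
  shows "tan_tanh_cross a_c x > 0"
proof -
  have "sin a_c < 0" using sin_lt_zero a_c_bounds by auto
  then have "cosh a_c * sin a_c < 0" by (simp add: mult_pos_neg)
  moreover have "tan_tanh_gap x > 0"
    using tan_tanh_gap_pos_below_root[OF tan_tanh_gap_a_c] a_c_bounds assms by auto
  ultimately show ?thesis
    unfolding tan_tanh_cross_at_gap_root[OF tan_tanh_gap_a_c] by (simp add: mult_neg_pos)
qed

lemma tan_tanh_cross_pos_upto_a_c:
  assumes "0 < x" "x < a" "a \<le> a_c"
  shows "tan_tanh_cross a x > 0"
proof -
  have gap_pos: "tan_tanh_gap t > 0" if "0 < t" "t < a_c" for t
    using tan_tanh_gap_pos_below_root[OF tan_tanh_gap_a_c] a_c_bounds that by auto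
  have "sin_sinh_ratio (a + x) < sin_sinh_ratio (a - x)"
  proof (cases "a + x \<le> a_c")
    case True
    show ?thesis by (rule sin_sinh_ratio_strict_antimono) (use assms True gap_pos in auto)
  next
    case False
    \<comment> \<open>Reflect the window \<open>[a - x, a + x]\<close> at \<open>a_c\<close>: it ends at \<open>a_c + y\<close> and starts
      at or to the right of \<open>a_c - y\<close>.\<close>
    define y where "y = a + x - a_c"
    have y: "0 < y" "y < a_c" "a - x \<le> a_c - y" using False assms by (auto simp: y_def)
    have "sin_sinh_ratio (a_c + y) < sin_sinh_ratio (a_c - y)"
      using tan_tanh_cross_a_c_pos[OF y(1,2)] tan_tanh_cross_pos_iff[OF y(1,2)] by blast
    also have "\<dots> \<le> sin_sinh_ratio (a - x)"
    proof (cases "a - x = a_c - y")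
      case False
      then show ?thesis
        using sin_sinh_ratio_strict_antimono[of "a - x" "a_c - y"] assms y gap_pos by auto
    qed simp
    finally show ?thesis by (simp add: y_def)
  qed
  then show ?thesis using tan_tanh_cross_pos_iff assms by auto
qed

lemma tan_tanh_cross_neg_above_a_c:
  assumes "a_c < a" "a < 2 * pi"
  shows "\<exists>x\<in>{0<..<a}. tan_tanh_cross a x < 0"
proof -
  define x where "x = min (a - a_c) (2 * pi - a) / 2"
  have "x \<le> (a - a_c) / 2" "x \<le> (2 * pi - a) / 2" "0 < x" using assms by (auto simp: x_def)
  then have x: "0 < x" "x < a" "a_c < a - x" "a + x < 2 * pi"
    using assms a_c_bounds by auto
  have "sin_sinh_ratio (a - x) < sin_sinh_ratio (a + x)"
  proof (rule sin_sinh_ratio_strict_mono)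
    show "0 < a - x" "a - x < a + x" using x by linarith+
  qed (use tan_tanh_gap_neg_above_root[OF tan_tanh_gap_a_c] a_c_bounds x in auto)
  moreover have "sinh (a + x) * sinh (a - x) / 2 > 0" using x by simp
  ultimately have "tan_tanh_cross a x < 0"
    unfolding tan_tanh_cross_eq_ratio_diff[OF x(1,2)] by (simp add: mult_pos_neg)
  then show ?thesis using x by auto
qed

lemma tan_tanh_cross_nonpos_beyond_2pi:
  assumes "2 * pi \<le> a"
  shows "\<exists>x\<in>{0<..<a}. tan_tanh_cross a x \<le> 0"
proof (cases "cosh a * sin a \<ge> 0")
  case True
  have "tan_tanh_cross a pi = - (cosh a * sin a) * sinh pi" by (simp add: tan_tanh_cross_def)
  also have "\<dots> \<le> 0" using True by simp
  finally have "tan_tanh_cross a pi \<le> 0" .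
  moreover have "pi \<in> {0<..<a}" using assms pi_gt_zero by (simp, linarith)
  ultimately show ?thesis by blast
next
  case False
  then have "a \<noteq> 2 * pi" by auto
  have "tan_tanh_cross a (2 * pi) = cosh a * sin a * sinh (2 * pi)"
    by (simp add: tan_tanh_cross_def)
  also have "\<dots> \<le> 0" using False by (simp add: mult_nonpos_nonneg)
  finally have "tan_tanh_cross a (2 * pi) \<le> 0" .
  moreover have "2 * pi \<in> {0<..<a}" using assms \<open>a \<noteq> 2 * pi\<close> pi_gt_zero by simp
  ultimately show ?thesis by blast
qed

lemma tan_tanh_cross_pos_iff_le_a_c:
  assumes "a > 0"
  shows "(\<forall>x\<in>{0<..<a}. tan_tanh_cross a x > 0) \<longleftrightarrow> a \<le> a_c"
proof
  assume pos: "\<forall>x\<in>{0<..<a}. tan_tanh_cross a x > 0"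
  show "a \<le> a_c"
  proof (rule ccontr)
    assume "\<not> a \<le> a_c"
    then consider "a_c < a" "a < 2 * pi" | "2 * pi \<le> a" by linarith
    then show False
      using tan_tanh_cross_neg_above_a_c tan_tanh_cross_nonpos_beyond_2pi pos
      by (cases; fastforce)
  qed
qed (use tan_tanh_cross_pos_upto_a_c in auto)

theorem lemmaC6:
  shows "a_c \<in> {pi<..<3/2*pi} \<and> tan a_c = tanh a_c \<and>
    (\<forall>a::real. a > 0 \<longrightarrow>
      ((\<forall>x\<in>{0<..<a}. cosh a * sin a * sinh x * cos x - sinh a * cos a * cosh x * sin x > 0)
        \<longleftrightarrow> a \<le> a_c))"
proof -
  have "tan a_c = tanh a_c"
    using tan_tanh_gap_a_c a_c_bounds pi_gt_zero tan_eq_tanh_iff_gap_zero by auto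
  then show ?thesis
    using a_c_bounds tan_tanh_cross_pos_iff_le_a_c unfolding tan_tanh_cross_def by auto
qed

end
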